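(* Let $\mathcal H=(M,n,\mathcal R)$ be a BMS, $S\subseteq\mathbb R^n$ a bounded convex polytope, and $x_0$ a point in the interior of $S$. The scheduler has a static winning strategy from $x_0$ if and only if there is a set $M'\subseteq M$ such that $\mathcal R(m)$ is a singleton $\{R(m)\}$ for every $m\in M'$ and the CMS $(M',n,R)$ is safe.
   Context: A multi-mode system is a tuple $\mathcal H=(M,n,\mathcal R)$ with $M$ a finite nonempty set of modes, $n\ge1$ variables, and $\mathcal R:M\to 2^{\mathbb R^n}$ giving nonempty rate sets; it is a BMS if each $\mathcal R(m)$ is a bounded convex polytope, a CMS if each is a singleton. A CMS $(M',n,R)$ is safe if there are $t_m\ge0$ ($m\in M'$) with $\sum_{m\in M'}t_m=1$ and $\sum_{m\in M'}t_mR(m)=\vec0$ (in particular $M'\neq\emptyset$). The schedulability game from $x_0$: in round $i\ge1$ the scheduler chooses $(m_i,t_i)\in M\times\mathbb R_{>0}$, the environment chooses $r_i\in\mathcal R(m_i)$, and $x_i=x_{i-1}+t_ir_i$. Scheduler strategies map finite histories $\langle x_0,(m_1,t_1),r_1,x_1,\dots,x_k\rangle$ to timed moves; environment strategies map a history and current timed move $(m,t)$ to a rate in $\mathcal R(m)$. A scheduler strategy $\sigma$ is static if $\sigma(\rho)=\sigma(\rho')$ for any two histories $\rho,\rho'$ of the same length with the same starting state and the same sequence of timed moves (i.e. it ignores the environment's choices), so it amounts to a fixed sequence $(m_1,t_1),(m_2,t_2),\dots$. A scheduler strategy is winning from $x_0$ if against every environment strategy the run satisfies $x_i\in S$ and $x_i+tr_{i+1}\in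 S$ for all $i\ge0$, $t\in[0,t_{i+1}]$, and $\sum_it_i=\infty$. *)

theory Defs
  imports "HOL-Analysis.Analysis"
begin

definition is_BMS :: "'m set \<Rightarrow> ('m \<Rightarrow> (real^'n) set) \<Rightarrow> bool" where
  "is_BMS M R \<longleftrightarrow> finite M \<and> M \<noteq> {} \<and> (\<forall>m\<in>M. R m \<noteq> {} \<and> polytope (R m))"

definition safe_CMS :: "'m set \<Rightarrow> ('m \<Rightarrow> real^'n) \<Rightarrow> bool" where
  "safe_CMS M' Rc \<longleftrightarrow> M' \<noteq> {} \<and>
     (\<exists>t. (\<forall>m\<in>M'. 0 \<le> t m) \<and> sum t M' = 1 \<and> (\<Sum>m\<in>M'. t m *\<^sub>R Rc m) = 0)"

definition pos :: "real^'n \<Rightarrow> (nat \<Rightarrow> real) \<Rightarrow> (nat \<Rightarrow> real^'n) \<Rightarrow> nat \<Rightarrow> real^'n" where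
  "pos x0 t r k = x0 + (\<Sum>j<k. t j *\<^sub>R r j)"

text \<open>A static scheduler strategy is a fixed sequence of timed moves (ms k, ts k), k = 0,1,...
  (round k+1 of the game). It is winning from x0 in S if all delays are positive, the
  total time diverges, and against every choice of rates r k \<in> R (ms k) (equivalently,
  every environment strategy) the trajectory stays in S, including during each move.\<close>
definition static_winning ::
  "'m set \<Rightarrow> ('m \<Rightarrow> (real^'n) set) \<Rightarrow> (real^'n) set \<Rightarrow> real^'n
     \<Rightarrow> (nat \<Rightarrow> 'm) \<Rightarrow> (nat \<Rightarrow> real) \<Rightarrow> bool" where
  "static_winning M R S x0 ms ts \<longleftrightarrow>
     (\<forall>k. ms k \<in> M \<and> 0 < ts k) \<and> \<not> summable ts \<and>
     (\<forall>r. (\<forall>k. r k \<in> R (ms k)) \<longrightarrow>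
        (\<forall>k. \<forall>\<tau>\<in>{0..ts k}. pos x0 ts r k + \<tau> *\<^sub>R r k \<in> S))"

end

theory Submission
  imports Defs
begin

text \<open>
  If some singleton modes have rates \<open>Rc m\<close> with \<open>\<Sum> t\<^sub>m Rc m = 0\<close>, cycling through the
  modes of positive weight with durations \<open>\<epsilon> t\<^sub>m\<close> returns to \<open>x\<^sub>0\<close> after every cycle, so for
  small \<open>\<epsilon>\<close> the trajectory never leaves a ball around \<open>x\<^sub>0\<close> inside \<open>S\<close>.

  Conversely, let a static schedule win. In a mode with two distinct rates \<open>a \<noteq> b\<close> the
  environment can play either one; the resulting positions differ by the time spent in that
  mode times \<open>a - b\<close>, and both lie in the bounded set \<open>S\<close>, so only a bounded amount of time
  is ever spent in non-singleton modes. Since the total time diverges, the time-weighted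
  average of the singleton rates up to round \<open>k\<close> tends to \<open>0\<close>; it lies in the convex hull of
  these rates, which is closed, so \<open>0\<close> is a convex combination of them.
\<close>

lemma convex_hull_finite_image_weights:
  fixes c :: "'i \<Rightarrow> 'a::real_vector"
  assumes "finite A" and "y \<in> convex hull (c ` A)"
  shows "\<exists>u. (\<forall>i\<in>A. 0 \<le> u i) \<and> sum u A = 1 \<and> (\<Sum>i\<in>A. u i *\<^sub>R c i) = y"
proof -
  let ?W = "{y. \<exists>u. (\<forall>i\<in>A. 0 \<le> u i) \<and> sum u A = 1 \<and> (\<Sum>i\<in>A. u i *\<^sub>R c i) = y}"
  have "convex hull (c ` A) \<subseteq> ?W"
  proof (rule hull_minimal)
    show "c ` A \<subseteq> ?W"
    proof (rule image_subsetI)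
      fix j assume "j \<in> A"
      then show "c j \<in> ?W"
        using \<open>finite A\<close> by (intro CollectI exI[of _ "\<lambda>i. if i = j then 1 else 0"])
          (simp add: if_distrib[of "\<lambda>x. x *\<^sub>R _"] cong: if_cong)
    qed
    show "convex ?W"
      unfolding convex_def
    proof (intro ballI allI impI)
      fix y z and u v :: real
      assume "y \<in> ?W" "z \<in> ?W" "0 \<le> u" "0 \<le> v" "u + v = 1"
      then obtain uy uz where
        "\<forall>i\<in>A. 0 \<le> uy i" "sum uy A = 1" "(\<Sum>i\<in>A. uy i *\<^sub>R c i) = y"
        "\<forall>i\<in>A. 0 \<le> uz i" "sum uz A = 1" "(\<Sum>i\<in>A. uz i *\<^sub>R c i) = z"
        by blast
      with \<open>0 \<le> u\<close> \<open>0 \<le> v\<close> \<open>u + v = 1\<close> show "u *\<^sub>R y + v *\<^sub>R z \<in> ?W"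
        by (intro CollectI exI[of _ "\<lambda>i. u * uy i + v * uz i"])
          (auto simp: sum.distrib sum_distrib_left[symmetric] scaleR_sum_right scaleR_add_left)
    qed
  qed
  with assms(2) show ?thesis by blast
qed

lemma convex_weights_of_bounded_weighted_sums:
  fixes c :: "'i \<Rightarrow> 'a::real_normed_vector" and w :: "nat \<Rightarrow> 'i \<Rightarrow> real"
  assumes fin: "finite A" and nonneg: "\<And>k i. i \<in> A \<Longrightarrow> 0 \<le> w k i"
    and bounded: "\<And>k. norm (\<Sum>i\<in>A. w k i *\<^sub>R c i) \<le> K"
    and unbounded: "\<And>X. \<exists>k. X < sum (w k) A"
  shows "\<exists>u. (\<forall>i\<in>A. 0 \<le> u i) \<and> sum u A = 1 \<and> (\<Sum>i\<in>A. u i *\<^sub>R c i) = 0"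
proof -
  let ?H = "convex hull (c ` A)"
  have "0 \<in> closure ?H"
    unfolding closure_approachable
  proof (intro allI impI)
    fix e :: real
    assume "0 < e"
    have "0 \<le> K"
      using bounded[of 0] norm_ge_zero order_trans by blast
    obtain k where k: "K / e < sum (w k) A"
      using unbounded by blast
    moreover have "0 \<le> K / e"
      using \<open>0 \<le> K\<close> \<open>0 < e\<close> by simp
    ultimately have pos: "0 < sum (w k) A"
      by linarith
    define y where "y = (\<Sum>i\<in>A. (w k i / sum (w k) A) *\<^sub>R c i)"
    have "y \<in> ?H"
      unfolding y_def using pos nonneg
      by (intro convex_sum[OF fin convex_convex_hull])
        (auto simp: sum_divide_distrib[symmetric] hull_inc)
    have "y = (1 / sum (w k) A) *\<^sub>R (\<Sum>i\<in>A. w k i *\<^sub>R c i)"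
      unfolding y_def by (simp add: scaleR_sum_right)
    then have "norm y = norm (\<Sum>i\<in>A. w k i *\<^sub>R c i) / sum (w k) A"
      using pos by simp
    also have "\<dots> \<le> K / sum (w k) A"
      using bounded pos by (simp add: divide_right_mono)
    also have "\<dots> < e"
      using k pos \<open>0 < e\<close> by (simp add: divide_less_eq mult.commute)
    finally show "\<exists>y\<in>?H. dist y 0 < e"
      using \<open>y \<in> ?H\<close> by auto
  qed
  moreover have "closed ?H"
    using finite_imp_compact_convex_hull[of "c ` A"] fin compact_imp_closed by blast
  ultimately show ?thesis
    using convex_hull_finite_image_weights[OF fin] by simp
qed

lemma sum_lessThan_periodic:
  fixes f :: "nat \<Rightarrow> 'a::comm_monoid_add"
  assumes "0 < p" and periodic: "\<And>j. f j = f (j mod p)" and "(\<Sum>j<p. f j) = 0"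
  shows "(\<Sum>j<k. f j) = (\<Sum>j<k mod p. f j)"
proof (induction k)
  case 0
  then show ?case by simp
next
  case (Suc k)
  have "(\<Sum>j<Suc k. f j) = (\<Sum>j<Suc (k mod p). f j)"
    using Suc periodic[of k] by simp
  also have "\<dots> = (\<Sum>j<Suc k mod p. f j)"
  proof (cases "Suc (k mod p) < p")
    case True
    then show ?thesis by (simp add: mod_Suc)
  next
    case False
    then have "Suc (k mod p) = p"
      using \<open>0 < p\<close> by (meson Suc_lessI mod_less_divisor)
    with \<open>(\<Sum>j<p. f j) = 0\<close> show ?thesis by (simp add: mod_Suc)
  qed
  finally show ?case .
qed

lemma norm_sum_cycle_le:
  fixes g :: "'m \<Rightarrow> 'a::real_normed_vector"
  assumes "L \<noteq> []" and "(\<Sum>m\<leftarrow>L. g m) = 0"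
  shows "norm (\<Sum>j<k. g (L ! (j mod length L))) \<le> (\<Sum>m\<leftarrow>L. norm (g m))"
proof -
  let ?p = "length L" and ?f = "\<lambda>j. g (L ! (j mod length L))"
  have "0 < ?p"
    using \<open>L \<noteq> []\<close> by simp
  have cycle_sum: "(\<Sum>j<?p. h (L ! j)) = (\<Sum>m\<leftarrow>L. h m)" for h :: "'m \<Rightarrow> 'b::comm_monoid_add"
    by (simp add: sum_list_sum_nth atLeast0LessThan)
  have "(\<Sum>j<k. ?f j) = (\<Sum>j<k mod ?p. ?f j)"
    using \<open>0 < ?p\<close> assms(2) cycle_sum[of g] by (intro sum_lessThan_periodic) simp_all
  then have "norm (\<Sum>j<k. ?f j) \<le> (\<Sum>j<k mod ?p. norm (?f j))"
    by (simp add: norm_sum)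
  also have "\<dots> \<le> (\<Sum>j<?p. norm (?f j))"
    using \<open>0 < ?p\<close> by (intro sum_mono2) auto
  also have "\<dots> = (\<Sum>m\<leftarrow>L. norm (g m))"
    using cycle_sum[of "\<lambda>m. norm (g m)"] by simp
  finally show ?thesis .
qed

lemma not_summable_imp_partial_sums_unbounded:
  fixes f :: "nat \<Rightarrow> real"
  assumes "\<And>k. 0 \<le> f k" and "\<not> summable f"
  shows "\<exists>k. X < (\<Sum>j<k. f j)"
proof (rule ccontr)
  assume "\<nexists>k. X < (\<Sum>j<k. f j)"
  then have "\<And>k. (\<Sum>j\<le>k. f j) \<le> X"
    by (metis lessThan_Suc_atMost not_less)
  with assms show False
    using bounded_imp_summable by blast
qed

lemma not_summable_if_bounded_below:
  fixes f :: "nat \<Rightarrow> real"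
  assumes "0 < c" and "\<And>k. c \<le> f k"
  shows "\<not> summable f"
proof
  assume "summable f"
  then have "summable (\<lambda>_::nat. c)"
    by (rule summable_comparison_test') (use assms in auto)
  with \<open>0 < c\<close> show False
    by (simp add: summable_const_iff)
qed

definition time_in_mode :: "(nat \<Rightarrow> 'm) \<Rightarrow> (nat \<Rightarrow> real) \<Rightarrow> 'm \<Rightarrow> nat \<Rightarrow> real" where
  "time_in_mode ms ts m k = (\<Sum>j | j < k \<and> ms j = m. ts j)"

lemma time_in_mode_nonneg:
  assumes "\<And>j. 0 \<le> ts j"
  shows "0 \<le> time_in_mode ms ts m k"
  unfolding time_in_mode_def using assms by (simp add: sum_nonneg)

lemma sum_lessThan_by_mode:
  fixes v :: "'m \<Rightarrow> 'a::real_vector"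
  assumes "finite M" and "\<And>j. ms j \<in> M"
  shows "(\<Sum>j<k. ts j *\<^sub>R v (ms j)) = (\<Sum>m\<in>M. time_in_mode ms ts m k *\<^sub>R v m)"
proof -
  have "(\<Sum>j<k. ts j *\<^sub>R v (ms j)) =
      (\<Sum>m\<in>M. \<Sum>j\<in>{j. j \<in> {..<k} \<and> ms j = m}. ts j *\<^sub>R v (ms j))"
    by (rule sum.group[symmetric]) (use assms in auto)
  also have "\<dots> = (\<Sum>m\<in>M. time_in_mode ms ts m k *\<^sub>R v m)"
    unfolding time_in_mode_def scaleR_sum_left by (intro sum.cong) simp_all
  finally show ?thesis .
qed

lemma sum_time_in_mode:
  assumes "finite M" and "\<And>j. ms j \<in> M"
  shows "(\<Sum>m\<in>M. time_in_mode ms ts m k) = (\<Sum>j<k. ts j)"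
  using sum_lessThan_by_mode[OF assms, of ts "\<lambda>_. 1::real"] by simp

lemma pos_Suc: "pos x0 ts r (Suc k) = pos x0 ts r k + ts k *\<^sub>R r k"
  unfolding pos_def by simp

lemma static_winningI_convex:
  assumes moves: "\<forall>k. ms k \<in> M \<and> 0 < ts k" and "\<not> summable ts"
    and "convex B" and "B \<subseteq> S"
    and positions: "\<And>r k. \<forall>k. r k \<in> R (ms k) \<Longrightarrow> pos x0 ts r k \<in> B"
  shows "static_winning M R S x0 ms ts"
  unfolding static_winning_def
proof (intro conjI allI impI ballI)
  fix r k \<tau>
  assume r: "\<forall>k. r k \<in> R (ms k)" and \<tau>: "\<tau> \<in> {0..ts k}"
  have "0 < ts k"
    using moves by blast
  define u where "u = \<tau> / ts k"
  have "0 \<le> u" "u \<le> 1"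
    unfolding u_def using \<tau> \<open>0 < ts k\<close> by auto
  moreover have "pos x0 ts r k + \<tau> *\<^sub>R r k = (1 - u) *\<^sub>R pos x0 ts r k + u *\<^sub>R pos x0 ts r (Suc k)"
    unfolding pos_Suc u_def using \<open>0 < ts k\<close> by (simp add: algebra_simps)
  ultimately show "pos x0 ts r k + \<tau> *\<^sub>R r k \<in> S"
    using \<open>convex B\<close> \<open>B \<subseteq> S\<close> positions[OF r] by (metis convexD_alt subsetD)
qed (use assms in auto)

lemma safe_CMS_obtain_cycle:
  assumes "finite M'" and "safe_CMS M' Rc"
  obtains L t where "L \<noteq> []" "set L \<subseteq> M'" "\<forall>m\<in>set L. 0 < t m"
    and "(\<Sum>m\<leftarrow>L. t m *\<^sub>R Rc m) = 0"
proof -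
  obtain t where t: "\<forall>m\<in>M'. 0 \<le> t m" "sum t M' = 1" "(\<Sum>m\<in>M'. t m *\<^sub>R Rc m) = 0"
    using \<open>safe_CMS M' Rc\<close> unfolding safe_CMS_def by blast
  define P where "P = {m\<in>M'. 0 < t m}"
  have "finite P"
    unfolding P_def using \<open>finite M'\<close> by simp
  then obtain L where L: "set L = P" "distinct L"
    using finite_distinct_list by blast
  have "sum t P = sum t M'"
    unfolding P_def using \<open>finite M'\<close> t(1) by (intro sum.mono_neutral_left) auto
  then have "L \<noteq> []"
    using L t(2) by auto
  moreover have "(\<Sum>m\<leftarrow>L. t m *\<^sub>R Rc m) = (\<Sum>m\<in>M'. t m *\<^sub>R Rc m)"
    unfolding sum_list_distinct_conv_sum_set[OF L(2)] L(1) P_def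
    using \<open>finite M'\<close> t(1) by (intro sum.mono_neutral_left) auto
  ultimately show ?thesis
    using that L t(3) unfolding P_def by auto
qed

lemma cyclic_schedule_static_winning:
  assumes "L \<noteq> []" and "set L \<subseteq> M"
    and rates: "\<forall>m\<in>set L. R m = {Rc m}" and weights: "\<forall>m\<in>set L. 0 < t m"
    and balanced: "(\<Sum>m\<leftarrow>L. t m *\<^sub>R Rc m) = 0" and "x0 \<in> interior S"
  shows "\<exists>ms ts. static_winning M R S x0 ms ts"
proof -
  define ms where "ms k = L ! (k mod length L)" for k
  define C where "C = (\<Sum>m\<leftarrow>L. norm (t m *\<^sub>R Rc m))"
  obtain e where "0 < e" and "ball x0 e \<subseteq> S"
    using \<open>x0 \<in> interior S\<close> mem_interior by blast
  define \<epsilon> where "\<epsilon> = e / (C + 1)"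
  define ts where "ts k = \<epsilon> * t (ms k)" for k
  have ms_L: "ms k \<in> set L" for k
    unfolding ms_def using \<open>L \<noteq> []\<close> by simp
  have "0 \<le> C"
    unfolding C_def by (rule sum_list_nonneg) auto
  with \<open>0 < e\<close> have "0 < \<epsilon>" and "\<epsilon> * C < e"
    unfolding \<epsilon>_def by (simp_all add: field_simps)
  show ?thesis
  proof (intro exI static_winningI_convex)
    show "\<forall>k. ms k \<in> M \<and> 0 < ts k"
      unfolding ts_def using ms_L \<open>set L \<subseteq> M\<close> weights \<open>0 < \<epsilon>\<close> by auto
    show "\<not> summable ts"
    proof (rule not_summable_if_bounded_below)
      show "0 < \<epsilon> * Min (t ` set L)"
        using \<open>0 < \<epsilon>\<close> weights \<open>L \<noteq> []\<close> by simp
      show "\<epsilon> * Min (t ` set L) \<le> ts k" for k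
        unfolding ts_def using \<open>0 < \<epsilon>\<close> ms_L by simp
    qed
    show "pos x0 ts r k \<in> ball x0 e" if "\<forall>k. r k \<in> R (ms k)" for r k
    proof -
      have "r j = Rc (ms j)" for j
        using that rates ms_L by blast
      then have "pos x0 ts r k - x0 = \<epsilon> *\<^sub>R (\<Sum>j<k. t (ms j) *\<^sub>R Rc (ms j))"
        unfolding pos_def ts_def by (simp add: scaleR_sum_right)
      moreover have "norm (\<Sum>j<k. t (ms j) *\<^sub>R Rc (ms j)) \<le> C"
        unfolding ms_def C_def using \<open>L \<noteq> []\<close> balanced by (rule norm_sum_cycle_le)
      ultimately have "norm (pos x0 ts r k - x0) \<le> \<epsilon> * C"
        using \<open>0 < \<epsilon>\<close> by (simp add: mult_left_mono)
      with \<open>\<epsilon> * C < e\<close> show ?thesis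
        by (simp add: dist_norm norm_minus_commute)
    qed
  qed (use \<open>ball x0 e \<subseteq> S\<close> in auto)
qed

lemma static_winning_pos_in:
  assumes "static_winning M R S x0 ms ts" and "\<forall>k. r k \<in> R (ms k)"
  shows "pos x0 ts r k \<in> S"
proof -
  have "0 \<in> {0..ts k}"
    using assms(1) unfolding static_winning_def by (simp add: less_imp_le)
  then show ?thesis
    using assms unfolding static_winning_def by (metis add.right_neutral scale_zero_left)
qed

lemma static_winning_displacement_le_diameter:
  assumes "static_winning M R S x0 ms ts" and "bounded S" and "\<forall>k. r k \<in> R (ms k)"
  shows "norm (pos x0 ts r k - x0) \<le> diameter S"
proof -
  have "x0 = pos x0 ts r 0"
    unfolding pos_def by simp
  then show ?thesis
    using static_winning_pos_in[OF assms(1,3)] diameter_bounded_bound[OF \<open>bounded S\<close>]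
    by (metis dist_norm)
qed

lemma static_winning_time_in_ambiguous_mode_bounded:
  assumes win: "static_winning M R S x0 ms ts" and "finite M" and "bounded S"
    and rates: "\<And>m. m \<in> M \<Longrightarrow> v m \<in> R m"
    and "m \<in> M" and "a \<in> R m" and "b \<in> R m" and "a \<noteq> b"
  shows "\<exists>c. \<forall>k. time_in_mode ms ts m k \<le> c"
proof
  have ms_M: "ms j \<in> M" for j
    using win unfolding static_winning_def by blast
  show "\<forall>k. time_in_mode ms ts m k \<le> diameter S / norm (a - b)"
  proof
    fix k
    let ?va = "v(m := a)" and ?vb = "v(m := b)"
    have "pos x0 ts (\<lambda>j. ?va (ms j)) k - pos x0 ts (\<lambda>j. ?vb (ms j)) k =
        (\<Sum>m'\<in>M. time_in_mode ms ts m' k *\<^sub>R (?va m' - ?vb m'))"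
      unfolding pos_def by (simp add: sum_lessThan_by_mode[OF \<open>finite M\<close> ms_M, where v = "?va"]
        sum_lessThan_by_mode[OF \<open>finite M\<close> ms_M, where v = "?vb"] sum_subtractf scaleR_diff_right
        del: fun_upd_apply)
    also have "\<dots> = time_in_mode ms ts m k *\<^sub>R (a - b)"
      using \<open>finite M\<close> \<open>m \<in> M\<close> by (simp add: if_distrib cong: if_cong)
    finally have diff: "pos x0 ts (\<lambda>j. ?va (ms j)) k - pos x0 ts (\<lambda>j. ?vb (ms j)) k =
        time_in_mode ms ts m k *\<^sub>R (a - b)" .
    have "\<forall>j. ?va (ms j) \<in> R (ms j)" "\<forall>j. ?vb (ms j) \<in> R (ms j)"
      using rates ms_M \<open>a \<in> R m\<close> \<open>b \<in> R m\<close> by auto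
    then have "dist (pos x0 ts (\<lambda>j. ?va (ms j)) k) (pos x0 ts (\<lambda>j. ?vb (ms j)) k) \<le> diameter S"
      by (intro diameter_bounded_bound \<open>bounded S\<close> static_winning_pos_in[OF win])
    moreover have "0 \<le> time_in_mode ms ts m k"
      using win unfolding static_winning_def by (simp add: time_in_mode_nonneg less_imp_le)
    ultimately have "time_in_mode ms ts m k * norm (a - b) \<le> diameter S"
      unfolding dist_norm diff by simp
    then show "time_in_mode ms ts m k \<le> diameter S / norm (a - b)"
      using \<open>a \<noteq> b\<close> by (simp add: le_divide_eq)
  qed
qed

lemma static_winning_rate_sum_outside_bounded:
  assumes win: "static_winning M R S x0 ms ts" and "finite M" and "bounded S"
    and rates: "\<And>m. m \<in> M \<Longrightarrow> v m \<in> R m"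
    and "N \<subseteq> M" and c: "\<And>m k. m \<in> N \<Longrightarrow> time_in_mode ms ts m k \<le> c m"
  shows "norm (\<Sum>m\<in>M - N. time_in_mode ms ts m k *\<^sub>R v m) \<le> diameter S + (\<Sum>m\<in>N. c m * norm (v m))"
proof -
  have ms_M: "\<And>j. ms j \<in> M" and ts_nonneg: "\<And>j. 0 \<le> ts j"
    using win unfolding static_winning_def by (auto simp: less_imp_le)
  let ?x = "pos x0 ts (\<lambda>j. v (ms j)) k" and ?w = "\<lambda>m. time_in_mode ms ts m k *\<^sub>R v m"
  have "?x - x0 = (\<Sum>m\<in>M. ?w m)"
    unfolding pos_def by (simp add: sum_lessThan_by_mode[where ms = ms and v = v, OF \<open>finite M\<close> ms_M])
  also have "\<dots> = (\<Sum>m\<in>M - N. ?w m) + (\<Sum>m\<in>N. ?w m)"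
    using \<open>N \<subseteq> M\<close> \<open>finite M\<close> by (rule sum.subset_diff)
  finally have "(\<Sum>m\<in>M - N. ?w m) = (?x - x0) - (\<Sum>m\<in>N. ?w m)"
    by (simp add: algebra_simps)
  then have "norm (\<Sum>m\<in>M - N. ?w m) \<le> norm (?x - x0) + norm (\<Sum>m\<in>N. ?w m)"
    by (subst \<open>(\<Sum>m\<in>M - N. ?w m) = _\<close>) (rule norm_triangle_ineq4)
  moreover have "\<forall>j. v (ms j) \<in> R (ms j)"
    using rates ms_M by blast
  then have "norm (?x - x0) \<le> diameter S"
    by (rule static_winning_displacement_le_diameter[OF win \<open>bounded S\<close>])
  moreover have "norm (\<Sum>m\<in>N. ?w m) \<le> (\<Sum>m\<in>N. norm (?w m))"
    by (rule norm_sum)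
  moreover have "norm (?w m) \<le> c m * norm (v m)" if "m \<in> N" for m
  proof -
    have "norm (?w m) = time_in_mode ms ts m k * norm (v m)"
      using time_in_mode_nonneg[where ms = ms and ts = ts, OF ts_nonneg] by simp
    also have "\<dots> \<le> c m * norm (v m)"
      using c[OF that] by (rule mult_right_mono) simp
    finally show ?thesis .
  qed
  then have "(\<Sum>m\<in>N. norm (?w m)) \<le> (\<Sum>m\<in>N. c m * norm (v m))"
    by (rule sum_mono)
  ultimately show ?thesis
    by linarith
qed

lemma static_winning_time_outside_unbounded:
  assumes win: "static_winning M R S x0 ms ts" and "finite M"
    and "N \<subseteq> M" and c: "\<And>m k. m \<in> N \<Longrightarrow> time_in_mode ms ts m k \<le> c m"
  shows "\<exists>k. X < (\<Sum>m\<in>M - N. time_in_mode ms ts m k)"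
proof -
  have ms_M: "\<And>j. ms j \<in> M" and ts_nonneg: "\<And>j. 0 \<le> ts j"
    using win unfolding static_winning_def by (auto simp: less_imp_le)
  moreover have "\<not> summable ts"
    using win unfolding static_winning_def by blast
  ultimately obtain k where "X + sum c N < (\<Sum>j<k. ts j)"
    using not_summable_imp_partial_sums_unbounded by blast
  moreover have "(\<Sum>j<k. ts j) =
      (\<Sum>m\<in>M - N. time_in_mode ms ts m k) + (\<Sum>m\<in>N. time_in_mode ms ts m k)"
    using sum_time_in_mode[where ms = ms and ts = ts and k = k, OF \<open>finite M\<close> ms_M]
      sum.subset_diff[where g = "\<lambda>m. time_in_mode ms ts m k", OF \<open>N \<subseteq> M\<close> \<open>finite M\<close>]
    by simp
  moreover have "(\<Sum>m\<in>N. time_in_mode ms ts m k) \<le> sum c N"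
    using c by (intro sum_mono) auto
  ultimately have "X < (\<Sum>m\<in>M - N. time_in_mode ms ts m k)"
    by linarith
  then show ?thesis ..
qed

lemma static_winning_imp_safe_CMS:
  assumes "is_BMS M R" and "bounded S" and win: "static_winning M R S x0 ms ts"
  shows "\<exists>M'\<subseteq>M. \<exists>Rc. (\<forall>m\<in>M'. R m = {Rc m}) \<and> safe_CMS M' Rc"
proof -
  have "finite M" and ts_nonneg: "\<And>j. 0 \<le> ts j"
    using assms unfolding is_BMS_def static_winning_def by (auto simp: less_imp_le)
  define v where "v m = (SOME x. x \<in> R m)" for m
  have v: "v m \<in> R m" if "m \<in> M" for m
    unfolding v_def using \<open>is_BMS M R\<close> that by (simp add: is_BMS_def some_in_eq)
  define N where "N = {m\<in>M. R m \<noteq> {v m}}"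
  have "N \<subseteq> M"
    unfolding N_def by blast
  have "\<exists>c. \<forall>k. time_in_mode ms ts m k \<le> c" if "m \<in> N" for m
  proof -
    obtain b where "m \<in> M" "b \<in> R m" "v m \<noteq> b"
      using \<open>m \<in> N\<close> v unfolding N_def by blast
    then show ?thesis
      using static_winning_time_in_ambiguous_mode_bounded[OF win \<open>finite M\<close> \<open>bounded S\<close> v] v
      by blast
  qed
  then obtain c where c: "\<And>m k. m \<in> N \<Longrightarrow> time_in_mode ms ts m k \<le> c m"
    by metis
  have "\<exists>u. (\<forall>m\<in>M - N. 0 \<le> u m) \<and> sum u (M - N) = 1 \<and> (\<Sum>m\<in>M - N. u m *\<^sub>R v m) = 0"
  proof (rule convex_weights_of_bounded_weighted_sums)
    show "finite (M - N)"
      using \<open>finite M\<close> by simp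
    show "0 \<le> time_in_mode ms ts m k" for m k
      using ts_nonneg by (rule time_in_mode_nonneg)
    show "norm (\<Sum>m\<in>M - N. time_in_mode ms ts m k *\<^sub>R v m) \<le> diameter S + (\<Sum>m\<in>N. c m * norm (v m))"
      for k
      by (rule static_winning_rate_sum_outside_bounded[OF win \<open>finite M\<close> \<open>bounded S\<close> v \<open>N \<subseteq> M\<close> c])
    show "\<exists>k. X < (\<Sum>m\<in>M - N. time_in_mode ms ts m k)" for X
      by (rule static_winning_time_outside_unbounded[OF win \<open>finite M\<close> \<open>N \<subseteq> M\<close> c])
  qed
  then obtain u where "\<forall>m\<in>M - N. 0 \<le> u m" "sum u (M - N) = 1" "(\<Sum>m\<in>M - N. u m *\<^sub>R v m) = 0"
    by blast
  moreover from \<open>sum u (M - N) = 1\<close> have "M - N \<noteq> {}"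
    by (metis sum.empty zero_neq_one)
  ultimately have "safe_CMS (M - N) v"
    unfolding safe_CMS_def by blast
  moreover have "\<forall>m\<in>M - N. R m = {v m}"
    unfolding N_def by auto
  ultimately show ?thesis
    using Diff_subset by blast
qed

theorem proposition4:
  fixes M :: "'m set" and R :: "'m \<Rightarrow> (real^'n) set"
    and S :: "(real^'n) set" and x0 :: "real^'n"
  assumes "is_BMS M R"
    and "polytope S"
    and "x0 \<in> interior S"
  shows "(\<exists>ms ts. static_winning M R S x0 ms ts) \<longleftrightarrow>
         (\<exists>M'\<subseteq>M. \<exists>Rc. (\<forall>m\<in>M'. R m = {Rc m}) \<and> safe_CMS M' Rc)"
proof
  assume "\<exists>ms ts. static_winning M R S x0 ms ts"
  then obtain ms ts where win: "static_winning M R S x0 ms ts"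
    by blast
  have "bounded S"
    using \<open>polytope S\<close> by (simp add: compact_imp_bounded polytope_imp_compact)
  with \<open>is_BMS M R\<close> show "\<exists>M'\<subseteq>M. \<exists>Rc. (\<forall>m\<in>M'. R m = {Rc m}) \<and> safe_CMS M' Rc"
    using win by (rule static_winning_imp_safe_CMS)
next
  assume "\<exists>M'\<subseteq>M. \<exists>Rc. (\<forall>m\<in>M'. R m = {Rc m}) \<and> safe_CMS M' Rc"
  then obtain M' Rc where "M' \<subseteq> M" and rates: "\<forall>m\<in>M'. R m = {Rc m}" and "safe_CMS M' Rc"
    by blast
  moreover have "finite M'"
    using \<open>is_BMS M R\<close> \<open>M' \<subseteq> M\<close> finite_subset unfolding is_BMS_def by blast
  ultimately obtain L t where "L \<noteq> []" "set L \<subseteq> M'" "\<forall>m\<in>set L. 0 < t m"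
    "(\<Sum>m\<leftarrow>L. t m *\<^sub>R Rc m) = 0"
    using safe_CMS_obtain_cycle by blast
  with \<open>M' \<subseteq> M\<close> rates show "\<exists>ms ts. static_winning M R S x0 ms ts"
    by (intro cyclic_schedule_static_winning[OF \<open>L \<noteq> []\<close> _ _ _ _ \<open>x0 \<in> interior S\<close>]) auto
qed

end
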